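(* Let $V\in{}_B\mathrm{Mod}^A$ and $W\in{}_A\mathrm{Mod}^C$. Then the DK-modules ${}_V\mathrm{Ind}(W)$ and $\mathrm{Ind}^W(V)$ (both with underlying space $V\odot W$, as described in the context) are isomorphic in ${}_B\mathrm{Mod}^C$.
   Context: $A$ is a CQG Hopf $*$-algebra: a complex Hopf algebra $(A,\Delta_A,\varepsilon_A,S_A)$ with an anti-linear involution making it a $*$-algebra with $\Delta_A$ a $*$-homomorphism, admitting a state $\Phi_A$ with $(\Phi_A\otimes\mathrm{id})\Delta_A(a)=\Phi_A(a)1=(\mathrm{id}\otimes\Phi_A)\Delta_A(a)$. $B\subseteq A$ is a unital right coideal $*$-subalgebra ($\Delta_A(B)\subseteq B\odot A$). Let $B_+=B\cap\ker\varepsilon_A$, $C=A/AB_+$ with quotient map $\pi_C$; $C$ is a coalgebra with comultiplication induced by $\Delta_A$ and a left $A$-module via $a\cdot\pi_C(a')=\pi_C(aa')$. Sweedler notation is used for coproducts and coactions ($\odot$ is the algebraic tensor product). For $(X,Y)\in\{(B,A),(A,C),(B,C)\}$, ${}_X\mathrm{Mod}^Y$ is the category of left $X$-modules $V$ with a right $Y$-comodule structure $v\mapsto v_{(0)}\otimes v_{(1)}$ such that $(xv)_{(0)}\otimes(xv)_{(1)}=x_{(1)}v_{(0)}\otimes x_{(2)}v_{(1)}$ (with $x_{(1)}\otimes x_{(2)}=\Delta_A(x)$ and $x_{(2)}v_{(1)}$ the product in $A$, resp. the $A$-action on $C$); morphisms are module and comodule maps. ${}_V\mathrm{Ind}(W)$: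 $V\odot W$ with $b(v\otimes w)=bv\otimes w$ and coaction $v\otimes w\mapsto v_{(0)}\otimes w_{(0)}\otimes v_{(1)}w_{(1)}$. $\mathrm{Ind}^W(V)$: $V\odot W$ with $b(v\otimes w)=b_{(1)}v\otimes b_{(2)}w$ and coaction $v\otimes w\mapsto v\otimes w_{(0)}\otimes w_{(1)}$. (Both are objects of ${}_B\mathrm{Mod}^C$.) *)

theory Defs
  imports Complex_Main
begin

class cscale = fixes cscale :: "complex \<Rightarrow> 'a \<Rightarrow> 'a" (infixr "\<cdot>\<^sub>C" 75)

class cvec = ab_group_add + cscale +
  assumes cscale_add_right: "c \<cdot>\<^sub>C (x + y) = c \<cdot>\<^sub>C x + c \<cdot>\<^sub>C y"
      and cscale_add_left: "(c + d) \<cdot>\<^sub>C x = c \<cdot>\<^sub>C x + d \<cdot>\<^sub>C x"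
      and cscale_cscale: "c \<cdot>\<^sub>C (d \<cdot>\<^sub>C x) = (c * d) \<cdot>\<^sub>C x"
      and cscale_one: "1 \<cdot>\<^sub>C x = x"

class calg = ring_1 + cvec +
  assumes cscale_mult_left: "c \<cdot>\<^sub>C (x * y) = (c \<cdot>\<^sub>C x) * y"
      and cscale_mult_right: "c \<cdot>\<^sub>C (x * y) = x * (c \<cdot>\<^sub>C y)"

instantiation complex :: calg
begin
definition cscale_complex :: "complex \<Rightarrow> complex \<Rightarrow> complex" where
  "cscale_complex c x = c * x"
instance by standard (simp_all add: cscale_complex_def algebra_simps)
end

definition clinear :: "('a::{plus,cscale} \<Rightarrow> 'b::{plus,cscale}) \<Rightarrow> bool" where
  "clinear f \<longleftrightarrow> (\<forall>x y. f (x + y) = f x + f y) \<and> (\<forall>c x. f (c \<cdot>\<^sub>C x) = c \<cdot>\<^sub>C f x)"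

text \<open>finite sums without algebraic class axioms\<close>
definition lsum :: "'a::{zero,plus} list \<Rightarrow> 'a" where
  "lsum xs = foldr (+) xs 0"

definition cspan :: "'a::{zero,plus,cscale} set \<Rightarrow> 'a set" where
  "cspan S = {lsum (map (\<lambda>(c,s). c \<cdot>\<^sub>C s) xs) | xs. set (map snd xs) \<subseteq> S}"

text \<open>Presentation of \<open>V \<odot> W\<close> as the commutative monoid of formal finite sums
  \<open>\<Sum> v_i \<otimes> w_i\<close> modulo biadditivity, zero and \<open>\<complex>\<close>-balancedness.\<close>

inductive teq :: "('a::{zero,plus,cscale} \<times> 'b::{zero,plus,cscale}) list \<Rightarrow> ('a \<times> 'b) list \<Rightarrow> bool" where
  teq_refl: "teq xs xs"
| teq_sym: "teq xs ys \<Longrightarrow> teq ys xs"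
| teq_trans: "teq xs ys \<Longrightarrow> teq ys zs \<Longrightarrow> teq xs zs"
| teq_app: "teq xs xs' \<Longrightarrow> teq ys ys' \<Longrightarrow> teq (xs @ ys) (xs' @ ys')"
| teq_swap: "teq (xs @ ys) (ys @ xs)"
| teq_zero_l: "teq [(0, w)] []"
| teq_zero_r: "teq [(v, 0)] []"
| teq_add_l: "teq [(v + v', w)] [(v, w), (v', w)]"
| teq_add_r: "teq [(v, w + w')] [(v, w), (v, w')]"
| teq_bal: "teq [(c \<cdot>\<^sub>C v, w)] [(v, c \<cdot>\<^sub>C w)]"

quotient_type (overloaded) ('a, 'b) tensor =
  "('a::{zero,plus,cscale} \<times> 'b::{zero,plus,cscale}) list" / teq
  morphisms Rep_tensor Abs_tensor
  by (rule equivpI; rule reflpI sympI transpI)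
     (auto intro: teq_refl teq_sym teq_trans)

definition tens :: "'a::{zero,plus,cscale} \<Rightarrow> 'b::{zero,plus,cscale} \<Rightarrow> ('a, 'b) tensor" where
  "tens v w = Abs_tensor [(v, w)]"

text \<open>The linear map \<open>V \<odot> W \<rightarrow> X\<close> induced by a bilinear balanced map \<open>\<beta>\<close>,
  evaluated on any representative \<open>\<Sum> v_i \<otimes> w_i\<close>.\<close>
definition tlift :: "('a::{zero,plus,cscale} \<Rightarrow> 'b::{zero,plus,cscale} \<Rightarrow> 'c::{zero,plus})
    \<Rightarrow> ('a, 'b) tensor \<Rightarrow> 'c" where
  "tlift \<beta> t = lsum (map (\<lambda>(v, w). \<beta> v w) (Rep_tensor t))"

instantiation tensor :: ("{zero,plus,cscale}", "{zero,plus,cscale}") "{zero,plus,cscale,uminus,minus}"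
begin
definition zero_tensor :: "('a, 'b) tensor" where "zero_tensor = Abs_tensor []"
definition plus_tensor :: "('a, 'b) tensor \<Rightarrow> ('a, 'b) tensor \<Rightarrow> ('a, 'b) tensor" where
  "plus_tensor s t = Abs_tensor (Rep_tensor s @ Rep_tensor t)"
definition cscale_tensor :: "complex \<Rightarrow> ('a, 'b) tensor \<Rightarrow> ('a, 'b) tensor" where
  "cscale_tensor c t = Abs_tensor (map (\<lambda>(v, w). (c \<cdot>\<^sub>C v, w)) (Rep_tensor t))"
definition uminus_tensor :: "('a, 'b) tensor \<Rightarrow> ('a, 'b) tensor" where
  "uminus_tensor t = (-1) \<cdot>\<^sub>C t"
definition minus_tensor :: "('a, 'b) tensor \<Rightarrow> ('a, 'b) tensor \<Rightarrow> ('a, 'b) tensor" where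
  "minus_tensor s t = s + (- t)"
instance ..
end

definition tmap :: "('a::{zero,plus,cscale} \<Rightarrow> 'c::{zero,plus,cscale}) \<Rightarrow>
    ('b::{zero,plus,cscale} \<Rightarrow> 'd::{zero,plus,cscale}) \<Rightarrow> ('a, 'b) tensor \<Rightarrow> ('c, 'd) tensor" where
  "tmap f g = tlift (\<lambda>x y. tens (f x) (g y))"

definition tassoc :: "(('a::{zero,plus,cscale}, 'b::{zero,plus,cscale}) tensor, 'c::{zero,plus,cscale}) tensor
    \<Rightarrow> ('a, ('b, 'c) tensor) tensor" where
  "tassoc = tlift (\<lambda>t z. tlift (\<lambda>x y. tens x (tens y z)) t)"

definition tmult :: "('a::{zero,plus,cscale,times}, 'b::{zero,plus,cscale,times}) tensor
    \<Rightarrow> ('a, 'b) tensor \<Rightarrow> ('a, 'b) tensor" where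
  "tmult s t = tlift (\<lambda>a b. tlift (\<lambda>a' b'. tens (a * a') (b * b')) t) s"

definition hopf_algebra :: "('a::calg \<Rightarrow> ('a, 'a) tensor) \<Rightarrow> ('a \<Rightarrow> complex) \<Rightarrow> ('a \<Rightarrow> 'a) \<Rightarrow> bool" where
  "hopf_algebra \<Delta> \<epsilon> S \<longleftrightarrow>
     clinear \<Delta> \<and> clinear \<epsilon> \<and> clinear S \<and>
     \<Delta> 1 = tens 1 1 \<and> (\<forall>x y. \<Delta> (x * y) = tmult (\<Delta> x) (\<Delta> y)) \<and>
     \<epsilon> 1 = 1 \<and> (\<forall>x y. \<epsilon> (x * y) = \<epsilon> x * \<epsilon> y) \<and>
     (\<forall>x. tassoc (tmap \<Delta> id (\<Delta> x)) = tmap id \<Delta> (\<Delta> x)) \<and>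
     (\<forall>x. tlift (\<lambda>a b. \<epsilon> a \<cdot>\<^sub>C b) (\<Delta> x) = x) \<and>
     (\<forall>x. tlift (\<lambda>a b. \<epsilon> b \<cdot>\<^sub>C a) (\<Delta> x) = x) \<and>
     (\<forall>x. tlift (\<lambda>a b. S a * b) (\<Delta> x) = \<epsilon> x \<cdot>\<^sub>C 1) \<and>
     (\<forall>x. tlift (\<lambda>a b. a * S b) (\<Delta> x) = \<epsilon> x \<cdot>\<^sub>C 1)"

definition star_hopf_algebra :: "('a::calg \<Rightarrow> ('a, 'a) tensor) \<Rightarrow> ('a \<Rightarrow> complex) \<Rightarrow> ('a \<Rightarrow> 'a)
    \<Rightarrow> ('a \<Rightarrow> 'a) \<Rightarrow> bool" where
  "star_hopf_algebra \<Delta> \<epsilon> S star \<longleftrightarrow>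
     hopf_algebra \<Delta> \<epsilon> S \<and>
     (\<forall>x y. star (x + y) = star x + star y) \<and>
     (\<forall>c x. star (c \<cdot>\<^sub>C x) = cnj c \<cdot>\<^sub>C star x) \<and>
     (\<forall>x y. star (x * y) = star y * star x) \<and>
     (\<forall>x. star (star x) = x) \<and>
     (\<forall>x. \<Delta> (star x) = tmap star star (\<Delta> x))"

definition is_state :: "('a::calg \<Rightarrow> 'a) \<Rightarrow> ('a \<Rightarrow> complex) \<Rightarrow> bool" where
  "is_state star \<Phi> \<longleftrightarrow> clinear \<Phi> \<and> \<Phi> 1 = 1 \<and>
     (\<forall>a. Im (\<Phi> (star a * a)) = 0 \<and> Re (\<Phi> (star a * a)) \<ge> 0)"

definition cqg_hopf_star_algebra :: "('a::calg \<Rightarrow> ('a, 'a) tensor) \<Rightarrow> ('a \<Rightarrow> complex) \<Rightarrow> ('a \<Rightarrow> 'a)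
    \<Rightarrow> ('a \<Rightarrow> 'a) \<Rightarrow> bool" where
  "cqg_hopf_star_algebra \<Delta> \<epsilon> S star \<longleftrightarrow>
     star_hopf_algebra \<Delta> \<epsilon> S star \<and>
     (\<exists>\<Phi>. is_state star \<Phi> \<and>
        (\<forall>a. tlift (\<lambda>x y. \<Phi> x \<cdot>\<^sub>C y) (\<Delta> a) = \<Phi> a \<cdot>\<^sub>C 1) \<and>
        (\<forall>a. tlift (\<lambda>x y. \<Phi> y \<cdot>\<^sub>C x) (\<Delta> a) = \<Phi> a \<cdot>\<^sub>C 1))"

section \<open>Right coideal *-subalgebras and the quotient coalgebra \<open>C = A / A B_+\<close>\<close>

text \<open>\<open>\<Delta>(b) \<in> B \<odot> A\<close>: \<open>\<Delta>(b)\<close> has a representative \<open>\<Sum> b_i \<otimes> a_i\<close> with all \<open>b_i \<in> B\<close>\<close>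
definition in_B_odot_A :: "'a::calg set \<Rightarrow> ('a, 'a) tensor \<Rightarrow> bool" where
  "in_B_odot_A B t \<longleftrightarrow> (\<exists>xs. set (map fst xs) \<subseteq> B \<and> t = Abs_tensor xs)"

definition right_coideal_star_subalgebra :: "('a::calg \<Rightarrow> ('a, 'a) tensor) \<Rightarrow> ('a \<Rightarrow> 'a) \<Rightarrow> 'a set \<Rightarrow> bool" where
  "right_coideal_star_subalgebra \<Delta> star B \<longleftrightarrow>
     1 \<in> B \<and> (\<forall>x\<in>B. \<forall>y\<in>B. x + y \<in> B \<and> x * y \<in> B) \<and>
     (\<forall>c. \<forall>x\<in>B. c \<cdot>\<^sub>C x \<in> B) \<and> (\<forall>x\<in>B. star x \<in> B) \<and>
     (\<forall>b\<in>B. in_B_odot_A B (\<Delta> b))"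

text \<open>a chosen representative of \<open>\<Delta>(b)\<close> in \<open>B \<odot> A\<close> (used for the Sweedler notation
  \<open>b_{(1)} \<otimes> b_{(2)}\<close> when \<open>b_{(1)}\<close> acts on a \<open>B\<close>-module)\<close>
definition crep :: "'a::calg set \<Rightarrow> ('a \<Rightarrow> ('a, 'a) tensor) \<Rightarrow> 'a \<Rightarrow> ('a \<times> 'a) list" where
  "crep B \<Delta> b = (SOME xs. set (map fst xs) \<subseteq> B \<and> \<Delta> b = Abs_tensor xs)"

text \<open>\<open>\<pi>\<^sub>C : A \<rightarrow> C\<close> is the quotient map with kernel \<open>A B_+\<close>; \<open>\<Delta>\<^sub>C, \<epsilon>\<^sub>C\<close> the induced coalgebra
  structure and \<open>actC\<close> the induced left \<open>A\<close>-module structure on \<open>C\<close>.\<close>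
definition quotient_coalgebra :: "('a::calg \<Rightarrow> ('a, 'a) tensor) \<Rightarrow> ('a \<Rightarrow> complex) \<Rightarrow> 'a set
    \<Rightarrow> ('a \<Rightarrow> 'c::cvec) \<Rightarrow> ('c \<Rightarrow> ('c, 'c) tensor) \<Rightarrow> ('c \<Rightarrow> complex) \<Rightarrow> ('a \<Rightarrow> 'c \<Rightarrow> 'c) \<Rightarrow> bool" where
  "quotient_coalgebra \<Delta> \<epsilon> B \<pi> \<Delta>C \<epsilon>C actC \<longleftrightarrow>
     clinear \<pi> \<and> surj \<pi> \<and>
     (\<forall>a. \<pi> a = 0 \<longleftrightarrow> a \<in> cspan {x * b | x b. b \<in> B \<and> \<epsilon> b = 0}) \<and>
     (\<forall>a. \<Delta>C (\<pi> a) = tmap \<pi> \<pi> (\<Delta> a)) \<and>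
     (\<forall>a. \<epsilon>C (\<pi> a) = \<epsilon> a) \<and>
     (\<forall>a a'. actC a (\<pi> a') = \<pi> (a * a'))"

definition left_B_module :: "'a::calg set \<Rightarrow> ('a \<Rightarrow> 'v::cvec \<Rightarrow> 'v) \<Rightarrow> bool" where
  "left_B_module B act \<longleftrightarrow>
     (\<forall>b\<in>B. clinear (act b)) \<and>
     (\<forall>b\<in>B. \<forall>b'\<in>B. \<forall>v. act (b + b') v = act b v + act b' v \<and> act (b * b') v = act b (act b' v)) \<and>
     (\<forall>c. \<forall>b\<in>B. \<forall>v. act (c \<cdot>\<^sub>C b) v = c \<cdot>\<^sub>C act b v) \<and>
     (\<forall>v. act 1 v = v)"

definition right_comodule :: "('x::calg \<Rightarrow> ('x, 'x) tensor) \<Rightarrow> ('x \<Rightarrow> complex) \<Rightarrow>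
    ('v::cvec \<Rightarrow> ('v, 'x) tensor) \<Rightarrow> bool" where
  "right_comodule \<Delta> \<epsilon> \<rho> \<longleftrightarrow> clinear \<rho> \<and>
     (\<forall>v. tassoc (tmap \<rho> id (\<rho> v)) = tmap id \<Delta> (\<rho> v)) \<and>
     (\<forall>v. tlift (\<lambda>v0 x. \<epsilon> x \<cdot>\<^sub>C v0) (\<rho> v) = v)"

text \<open>right comodule over the coalgebra \<open>C\<close> (which is not an algebra)\<close>
definition right_C_comodule :: "('c::cvec \<Rightarrow> ('c, 'c) tensor) \<Rightarrow> ('c \<Rightarrow> complex) \<Rightarrow>
    ('w::cvec \<Rightarrow> ('w, 'c) tensor) \<Rightarrow> bool" where
  "right_C_comodule \<Delta>C \<epsilon>C \<rho> \<longleftrightarrow> clinear \<rho> \<and>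
     (\<forall>w. tassoc (tmap \<rho> id (\<rho> w)) = tmap id \<Delta>C (\<rho> w)) \<and>
     (\<forall>w. tlift (\<lambda>w0 c. \<epsilon>C c \<cdot>\<^sub>C w0) (\<rho> w) = w)"

definition Mod_BA :: "('a::calg \<Rightarrow> ('a, 'a) tensor) \<Rightarrow> ('a \<Rightarrow> complex) \<Rightarrow> 'a set \<Rightarrow>
    ('a \<Rightarrow> 'v::cvec \<Rightarrow> 'v) \<Rightarrow> ('v \<Rightarrow> ('v, 'a) tensor) \<Rightarrow> bool" where
  "Mod_BA \<Delta> \<epsilon> B act \<rho> \<longleftrightarrow> left_B_module B act \<and> right_comodule \<Delta> \<epsilon> \<rho> \<and>
     (\<forall>b\<in>B. \<forall>v. \<rho> (act b v) =
        lsum (map (\<lambda>(b1, b2). tlift (\<lambda>v0 a. tens (act b1 v0) (b2 * a)) (\<rho> v)) (crep B \<Delta> b)))"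

definition Mod_AC :: "('a::calg \<Rightarrow> ('a, 'a) tensor) \<Rightarrow> ('c::cvec \<Rightarrow> ('c, 'c) tensor) \<Rightarrow> ('c \<Rightarrow> complex)
    \<Rightarrow> ('a \<Rightarrow> 'c \<Rightarrow> 'c) \<Rightarrow> ('a \<Rightarrow> 'w::cvec \<Rightarrow> 'w) \<Rightarrow> ('w \<Rightarrow> ('w, 'c) tensor) \<Rightarrow> bool" where
  "Mod_AC \<Delta> \<Delta>C \<epsilon>C actC act \<rho> \<longleftrightarrow> left_B_module UNIV act \<and> right_C_comodule \<Delta>C \<epsilon>C \<rho> \<and>
     (\<forall>a w. \<rho> (act a w) =
        tlift (\<lambda>a1 a2. tlift (\<lambda>w0 c. tens (act a1 w0) (actC a2 c)) (\<rho> w)) (\<Delta> a))"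

text \<open>\<open>\<^sub>V Ind(W)\<close>: \<open>b(v \<otimes> w) = bv \<otimes> w\<close>, \<open>v \<otimes> w \<mapsto> v_{(0)} \<otimes> w_{(0)} \<otimes> v_{(1)} w_{(1)}\<close>\<close>
definition indV_act :: "('a \<Rightarrow> 'v::cvec \<Rightarrow> 'v) \<Rightarrow> 'a \<Rightarrow> ('v, 'w::cvec) tensor \<Rightarrow> ('v, 'w) tensor" where
  "indV_act actV b = tlift (\<lambda>v w. tens (actV b v) w)"

definition indV_coact :: "('v::cvec \<Rightarrow> ('v, 'a::calg) tensor) \<Rightarrow> ('w::cvec \<Rightarrow> ('w, 'c::cvec) tensor)
    \<Rightarrow> ('a \<Rightarrow> 'c \<Rightarrow> 'c) \<Rightarrow> ('v, 'w) tensor \<Rightarrow> (('v, 'w) tensor, 'c) tensor" where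
  "indV_coact \<rho>V \<rho>W actC = tlift (\<lambda>v w.
      tlift (\<lambda>v0 a. tlift (\<lambda>w0 c. tens (tens v0 w0) (actC a c)) (\<rho>W w)) (\<rho>V v))"

text \<open>\<open>Ind\<^sup>W(V)\<close>: \<open>b(v \<otimes> w) = b_{(1)} v \<otimes> b_{(2)} w\<close>, \<open>v \<otimes> w \<mapsto> v \<otimes> w_{(0)} \<otimes> w_{(1)}\<close>\<close>
definition indW_act :: "'a::calg set \<Rightarrow> ('a \<Rightarrow> ('a, 'a) tensor) \<Rightarrow> ('a \<Rightarrow> 'v::cvec \<Rightarrow> 'v)
    \<Rightarrow> ('a \<Rightarrow> 'w::cvec \<Rightarrow> 'w) \<Rightarrow> 'a \<Rightarrow> ('v, 'w) tensor \<Rightarrow> ('v, 'w) tensor" where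
  "indW_act B \<Delta> actV actW b = tlift (\<lambda>v w.
      lsum (map (\<lambda>(b1, b2). tens (actV b1 v) (actW b2 w)) (crep B \<Delta> b)))"

definition indW_coact :: "('w::cvec \<Rightarrow> ('w, 'c::cvec) tensor) \<Rightarrow> ('v::cvec, 'w) tensor
    \<Rightarrow> (('v, 'w) tensor, 'c) tensor" where
  "indW_coact \<rho>W = tlift (\<lambda>v w. tlift (\<lambda>w0 c. tens (tens v w0) c) (\<rho>W w))"

definition iso_BModC :: "'a set \<Rightarrow> ('a \<Rightarrow> 'x::{zero,plus,cscale} \<Rightarrow> 'x) \<Rightarrow> ('x \<Rightarrow> ('x, 'c::{zero,plus,cscale}) tensor)
    \<Rightarrow> ('a \<Rightarrow> 'y::{zero,plus,cscale} \<Rightarrow> 'y) \<Rightarrow> ('y \<Rightarrow> ('y, 'c) tensor) \<Rightarrow> bool" where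
  "iso_BModC B act1 co1 act2 co2 \<longleftrightarrow>
     (\<exists>f g. clinear f \<and> clinear g \<and> (\<forall>x. g (f x) = x) \<and> (\<forall>y. f (g y) = y) \<and>
        (\<forall>b\<in>B. \<forall>x. f (act1 b x) = act2 b (f x)) \<and>
        (\<forall>b\<in>B. \<forall>y. g (act2 b y) = act1 b (g y)) \<and>
        (\<forall>x. co2 (f x) = tmap f id (co1 x)) \<and>
        (\<forall>y. co1 (g y) = tmap g id (co2 y)))"

end

theory Submission
  imports Defs
begin

text \<open>The isomorphism \<open>\<^sub>VInd(W) \<rightarrow> Ind\<^sup>W(V)\<close> is \<open>v \<otimes> w \<mapsto> v\<^sub>(\<^sub>0\<^sub>) \<otimes> v\<^sub>(\<^sub>1\<^sub>) w\<close>, with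
  inverse \<open>v \<otimes> w \<mapsto> v\<^sub>(\<^sub>0\<^sub>) \<otimes> S(v\<^sub>(\<^sub>1\<^sub>)) w\<close>. By coassociativity of the coaction on \<open>V\<close>,
  twisting by \<open>\<phi>\<close> and then by \<open>\<psi>\<close> is twisting by the convolution \<open>\<psi> * \<phi>\<close>, so the two maps are
  inverse because \<open>S * id = id * S = \<epsilon>\<close>. The compatibility
  \<open>(bv)\<^sub>(\<^sub>0\<^sub>) \<otimes> (bv)\<^sub>(\<^sub>1\<^sub>) = b\<^sub>(\<^sub>1\<^sub>)v\<^sub>(\<^sub>0\<^sub>) \<otimes> b\<^sub>(\<^sub>2\<^sub>)v\<^sub>(\<^sub>1\<^sub>)\<close> in \<open>V\<close> makes the first map
  \<open>B\<close>-linear, and the corresponding compatibility in \<open>W\<close>, again with coassociativity in \<open>V\<close>,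
  makes it \<open>C\<close>-colinear.\<close>

section \<open>The algebraic tensor product\<close>

lemma lsum_eq_sum_list [simp]: "lsum xs = sum_list (xs :: 'a::monoid_add list)"
  by (simp add: lsum_def sum_list.eq_foldr)

lemma Abs_Rep_tensor [simp]: "Abs_tensor (Rep_tensor t) = t"
  by (rule Quotient3_abs_rep[OF Quotient3_tensor])

lemma teq_Rep_Abs_tensor: "teq (Rep_tensor (Abs_tensor xs)) xs"
  by (rule Quotient3_rep_abs[OF Quotient3_tensor]) (rule teq_refl)

lemma Abs_tensor_eq_iff: "Abs_tensor xs = Abs_tensor ys \<longleftrightarrow> teq xs ys"
  using Quotient3_rel[OF Quotient3_tensor, of xs ys] by (auto intro: teq_refl)

lemma Abs_tensor_cases: obtains xs where "t = Abs_tensor xs"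
  by (metis Abs_Rep_tensor)

lemma Abs_tensor_append: "Abs_tensor xs + Abs_tensor ys = Abs_tensor (xs @ ys)"
  unfolding plus_tensor_def Abs_tensor_eq_iff by (intro teq_app teq_Rep_Abs_tensor)

lemma cscale_zero_left: "(0::complex) \<cdot>\<^sub>C (x::'a::cvec) = 0"
proof -
  have "0 \<cdot>\<^sub>C x = 0 \<cdot>\<^sub>C x + (0 \<cdot>\<^sub>C x :: 'a)" using cscale_add_left[of 0 0 x] by simp
  then show ?thesis by simp
qed

lemma cscale_zero_right: "c \<cdot>\<^sub>C (0::'a::cvec) = 0"
proof -
  have "c \<cdot>\<^sub>C 0 = c \<cdot>\<^sub>C 0 + (c \<cdot>\<^sub>C 0 :: 'a)" using cscale_add_right[of c 0 0] by simp
  then show ?thesis by simp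
qed

lemma cscale_minus_one_add_self: "(-1::complex) \<cdot>\<^sub>C (x::'a::cvec) + x = 0"
  using cscale_add_left[of "-1" 1 x] by (simp add: cscale_zero_left cscale_one)

lemma teq_map_cscale:
  "teq xs ys \<Longrightarrow> teq (map (\<lambda>(v, w). (c \<cdot>\<^sub>C v, w)) xs) (map (\<lambda>(v, w). (c \<cdot>\<^sub>C v, w)) (ys :: ('a::cvec \<times> 'b::cvec) list))"
proof (induction rule: teq.induct)
  case (teq_bal d v w)
  have "teq [(d \<cdot>\<^sub>C (c \<cdot>\<^sub>C v), w)] [(c \<cdot>\<^sub>C v, d \<cdot>\<^sub>C w)]" by (rule teq.teq_bal)
  then show ?case by (simp add: cscale_cscale mult.commute)
qed (auto simp: cscale_zero_right cscale_add_right intro: teq.intros)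

lemma cscale_Abs_tensor:
  "c \<cdot>\<^sub>C Abs_tensor xs = Abs_tensor (map (\<lambda>(v, w). (c \<cdot>\<^sub>C v, w)) (xs :: ('a::cvec \<times> 'b::cvec) list))"
  unfolding cscale_tensor_def Abs_tensor_eq_iff by (rule teq_map_cscale[OF teq_Rep_Abs_tensor])

instance tensor :: (cvec, cvec) ab_group_add
proof
  fix a b c :: "('a, 'b) tensor"
  obtain xs ys zs where a: "a = Abs_tensor xs" and b: "b = Abs_tensor ys" and c: "c = Abs_tensor zs"
    by (metis Abs_tensor_cases)
  show "a + b + c = a + (b + c)"
    by (simp add: a b c Abs_tensor_append)
  show "a + b = b + a"
    by (simp add: a b Abs_tensor_append Abs_tensor_eq_iff teq_swap)
  show "0 + a = a"
    by (simp add: a Abs_tensor_append zero_tensor_def)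
  show "a - b = a + - b"
    by (simp add: minus_tensor_def)
  have "Abs_tensor (map (\<lambda>(v, w). ((-1) \<cdot>\<^sub>C v, w)) xs) + Abs_tensor xs = 0" for xs :: "('a \<times> 'b) list"
  proof (induction xs)
    case Nil
    then show ?case by (simp add: Abs_tensor_append zero_tensor_def)
  next
    case (Cons x xs)
    obtain v w where x: "x = (v, w)" by force
    have "Abs_tensor [((-1) \<cdot>\<^sub>C v, w)] + Abs_tensor [(v, w)] = Abs_tensor [((-1) \<cdot>\<^sub>C v + v, w)]"
      by (simp add: Abs_tensor_append Abs_tensor_eq_iff teq_add_l teq_sym)
    also have "\<dots> = 0"
      by (simp add: cscale_minus_one_add_self zero_tensor_def Abs_tensor_eq_iff teq_zero_l)
    finally have head: "Abs_tensor [((-1) \<cdot>\<^sub>C v, w)] + Abs_tensor [(v, w)] = 0" .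
    have "Abs_tensor (map (\<lambda>(v, w). ((-1) \<cdot>\<^sub>C v, w)) (x # xs)) + Abs_tensor (x # xs)
        = (Abs_tensor [((-1) \<cdot>\<^sub>C v, w)] + Abs_tensor [(v, w)])
          + (Abs_tensor (map (\<lambda>(v, w). ((-1) \<cdot>\<^sub>C v, w)) xs) + Abs_tensor xs)"
      by (simp add: x Abs_tensor_append Abs_tensor_eq_iff)
         (metis append_Cons append_Nil append_assoc teq_app teq_refl teq_swap)
    also have "\<dots> = 0 + 0"
      by (simp only: head Cons.IH)
    also have "\<dots> = 0"
      by (simp add: zero_tensor_def Abs_tensor_append)
    finally show ?case .
  qed
  then show "- a + a = 0"
    by (simp add: a uminus_tensor_def cscale_Abs_tensor)
qed

instance tensor :: (cvec, cvec) cvec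
proof
  fix a b :: "('a, 'b) tensor" and d e :: complex
  obtain xs ys where a: "a = Abs_tensor xs" and b: "b = Abs_tensor ys"
    by (metis Abs_tensor_cases)
  show "d \<cdot>\<^sub>C (a + b) = d \<cdot>\<^sub>C a + d \<cdot>\<^sub>C b"
    by (simp add: a b Abs_tensor_append cscale_Abs_tensor)
  have "(d + e) \<cdot>\<^sub>C Abs_tensor xs = d \<cdot>\<^sub>C Abs_tensor xs + e \<cdot>\<^sub>C Abs_tensor xs" for xs :: "('a \<times> 'b) list"
  proof (induction xs)
    case Nil
    then show ?case by (simp add: cscale_Abs_tensor Abs_tensor_append)
  next
    case (Cons x xs)
    obtain v w where x: "x = (v, w)" by force
    have head: "Abs_tensor [((d + e) \<cdot>\<^sub>C v, w)] = Abs_tensor [(d \<cdot>\<^sub>C v, w)] + Abs_tensor [(e \<cdot>\<^sub>C v, w)]"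
      by (simp add: Abs_tensor_append Abs_tensor_eq_iff teq_add_l cscale_add_left)
    have split: "k \<cdot>\<^sub>C Abs_tensor (x # xs) = Abs_tensor [(k \<cdot>\<^sub>C v, w)] + k \<cdot>\<^sub>C Abs_tensor xs" for k
      by (simp add: x cscale_Abs_tensor Abs_tensor_append)
    show ?case by (simp add: split head Cons.IH algebra_simps)
  qed
  then show "(d + e) \<cdot>\<^sub>C a = d \<cdot>\<^sub>C a + e \<cdot>\<^sub>C a"
    by (simp add: a)
  show "d \<cdot>\<^sub>C e \<cdot>\<^sub>C a = (d * e) \<cdot>\<^sub>C a"
    by (simp add: a cscale_Abs_tensor cscale_cscale comp_def split_def)
  show "1 \<cdot>\<^sub>C a = a"
    by (simp add: a cscale_Abs_tensor cscale_one)
qed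

definition cbilinear :: "('a::cvec \<Rightarrow> 'b::cvec \<Rightarrow> 'c::cvec) \<Rightarrow> bool" where
  "cbilinear \<beta> \<longleftrightarrow>
     (\<forall>x x' y. \<beta> (x + x') y = \<beta> x y + \<beta> x' y) \<and> (\<forall>x y y'. \<beta> x (y + y') = \<beta> x y + \<beta> x y') \<and>
     (\<forall>c x y. \<beta> (c \<cdot>\<^sub>C x) y = c \<cdot>\<^sub>C \<beta> x y) \<and> (\<forall>c x y. \<beta> x (c \<cdot>\<^sub>C y) = c \<cdot>\<^sub>C \<beta> x y)"

lemma cbilinearI:
  assumes "\<And>x x' y. \<beta> (x + x') y = \<beta> x y + \<beta> x' y" and "\<And>x y y'. \<beta> x (y + y') = \<beta> x y + \<beta> x y'"
    and "\<And>c x y. \<beta> (c \<cdot>\<^sub>C x) y = c \<cdot>\<^sub>C \<beta> x y" and "\<And>c x y. \<beta> x (c \<cdot>\<^sub>C y) = c \<cdot>\<^sub>C \<beta> x y"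
  shows "cbilinear \<beta>"
  using assms unfolding cbilinear_def by blast

lemma cbilinearD:
  assumes "cbilinear \<beta>"
  shows "\<beta> (x + x') y = \<beta> x y + \<beta> x' y" and "\<beta> x (y + y') = \<beta> x y + \<beta> x y'"
    and "\<beta> (c \<cdot>\<^sub>C x) y = c \<cdot>\<^sub>C \<beta> x y" and "\<beta> x (c \<cdot>\<^sub>C y) = c \<cdot>\<^sub>C \<beta> x y"
  using assms unfolding cbilinear_def by blast+

lemma cbilinear_clinear_left: "cbilinear \<beta> \<Longrightarrow> clinear (\<lambda>x. \<beta> x y)"
  by (simp add: cbilinear_def clinear_def)

lemma cbilinear_clinear_right: "cbilinear \<beta> \<Longrightarrow> clinear (\<beta> x)"
  by (simp add: cbilinear_def clinear_def)

lemma clinearD: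
  assumes "clinear f"
  shows "f (x + y) = f x + f y" and "f (c \<cdot>\<^sub>C x) = c \<cdot>\<^sub>C f x"
  using assms unfolding clinear_def by blast+

lemma clinear_id: "clinear id"
  by (simp add: clinear_def)

lemma additive_zero:
  fixes f :: "'a::ab_group_add \<Rightarrow> 'b::ab_group_add"
  assumes "\<And>x y. f (x + y) = f x + f y"
  shows "f 0 = 0"
  using assms[of 0 0] by simp

lemma clinear_comp: "clinear f \<Longrightarrow> clinear g \<Longrightarrow> clinear (\<lambda>x. f (g x))"
  by (simp add: clinear_def)

lemma clinear_zero: "clinear (f :: 'a::cvec \<Rightarrow> 'b::cvec) \<Longrightarrow> f 0 = 0"
  by (rule additive_zero) (rule clinearD)

lemma cbilinear_zero:
  assumes "cbilinear \<beta>"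
  shows "\<beta> 0 y = 0" and "\<beta> x 0 = 0"
  using additive_zero[of "\<lambda>x. \<beta> x y"] additive_zero[of "\<beta> x"] cbilinearD[OF assms] by blast+

lemma additive_sum_list:
  fixes f :: "'a::ab_group_add \<Rightarrow> 'b::ab_group_add"
  assumes "\<And>x y. f (x + y) = f x + f y"
  shows "f (sum_list xs) = sum_list (map f xs)"
  by (induction xs) (simp_all add: assms additive_zero[OF assms])

lemma sum_list_map_swap:
  "(\<Sum>x\<leftarrow>xs. \<Sum>y\<leftarrow>ys. f x y) = (\<Sum>y\<leftarrow>ys. \<Sum>x\<leftarrow>xs. f x y :: 'c::ab_group_add)"
  by (induction xs) (simp_all add: sum_list_addf)

lemma cscale_sum_list: "c \<cdot>\<^sub>C sum_list xs = sum_list (map (\<lambda>x. c \<cdot>\<^sub>C x) (xs :: 'a::cvec list))"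
  by (induction xs) (simp_all add: cscale_zero_right cscale_add_right)

lemma tlift_eq_sum_list: "tlift \<beta> t = sum_list (map (case_prod \<beta>) (Rep_tensor t))"
  by (simp add: tlift_def)

lemma teq_sum_list_cbilinear:
  assumes "teq xs ys" and "cbilinear \<beta>"
  shows "sum_list (map (case_prod \<beta>) xs) = sum_list (map (case_prod \<beta>) ys)"
  using assms(1)
proof (induction rule: teq.induct)
  case (teq_swap xs ys)
  then show ?case by (simp add: add.commute)
qed (simp_all add: cbilinear_zero[OF assms(2)] cbilinearD[OF assms(2)])

lemma tlift_Abs_tensor: "cbilinear \<beta> \<Longrightarrow> tlift \<beta> (Abs_tensor xs) = sum_list (map (case_prod \<beta>) xs)"
  unfolding tlift_eq_sum_list by (rule teq_sum_list_cbilinear[OF teq_Rep_Abs_tensor])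

lemma tlift_tens [simp]: "cbilinear \<beta> \<Longrightarrow> tlift \<beta> (tens x y) = \<beta> x y"
  by (simp add: tens_def tlift_Abs_tensor)

lemma tlift_add: "cbilinear \<beta> \<Longrightarrow> tlift \<beta> (s + t) = tlift \<beta> s + tlift \<beta> t"
  by (cases s rule: Abs_tensor_cases, cases t rule: Abs_tensor_cases)
     (simp add: Abs_tensor_append tlift_Abs_tensor)

lemma tlift_cscale: "cbilinear \<beta> \<Longrightarrow> tlift \<beta> (c \<cdot>\<^sub>C t) = c \<cdot>\<^sub>C tlift \<beta> t"
  by (cases t rule: Abs_tensor_cases)
     (simp add: cscale_Abs_tensor tlift_Abs_tensor cscale_sum_list cbilinearD comp_def case_prod_beta)

lemma clinear_tlift: "cbilinear \<beta> \<Longrightarrow> clinear (tlift \<beta>)"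
  by (simp add: clinear_def tlift_add tlift_cscale)

text \<open>No balancedness is needed below: \<open>tlift\<close> evaluates \<open>\<beta>\<close> on one fixed representative.\<close>

lemma additive_tlift:
  fixes f :: "'c::ab_group_add \<Rightarrow> 'd::ab_group_add"
  assumes "\<And>x y. f (x + y) = f x + f y"
  shows "f (tlift \<beta> t) = tlift (\<lambda>x y. f (\<beta> x y)) t"
  unfolding tlift_eq_sum_list split_def additive_sum_list[of f, OF assms] by (simp add: comp_def)

lemma tlift_add_fun: "tlift (\<lambda>x y. \<beta> x y + \<gamma> x y) t = tlift \<beta> t + (tlift \<gamma> t :: 'c::ab_group_add)"
  unfolding tlift_eq_sum_list split_def by (simp add: sum_list_addf)

lemma tlift_zero_fun: "tlift (\<lambda>x y. 0) t = (0 :: 'c::ab_group_add)"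
  unfolding tlift_eq_sum_list by (induction "Rep_tensor t") simp_all

lemma tlift_cscale_fun: "tlift (\<lambda>x y. c \<cdot>\<^sub>C \<beta> x y) t = c \<cdot>\<^sub>C (tlift \<beta> t :: 'c::cvec)"
  by (subst additive_tlift[of "\<lambda>x. c \<cdot>\<^sub>C x"]) (simp_all add: cscale_add_right)

lemma tlift_sum_list_fun:
  "tlift (\<lambda>x y. sum_list (map (\<lambda>i. \<beta> i x y) is)) t = sum_list (map (\<lambda>i. tlift (\<beta> i) t :: 'c::ab_group_add) is)"
  by (induction "is") (simp_all add: tlift_add_fun tlift_zero_fun)

lemma tlift_tlift_swap:
  "tlift (\<lambda>x y. tlift (\<lambda>u z. \<gamma> x y u z :: 'c::ab_group_add) t') t
     = tlift (\<lambda>u z. tlift (\<lambda>x y. \<gamma> x y u z) t) t'"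
  unfolding tlift_eq_sum_list split_def by (rule sum_list_map_swap)

lemma cbilinear_tens: "cbilinear tens"
proof (rule cbilinearI)
  fix x x' :: "'a::cvec" and y y' :: "'b::cvec" and c :: complex
  show "tens (x + x') y = tens x y + tens x' y"
    by (simp add: tens_def Abs_tensor_append Abs_tensor_eq_iff teq_add_l)
  show "tens x (y + y') = tens x y + tens x y'"
    by (simp add: tens_def Abs_tensor_append Abs_tensor_eq_iff teq_add_r)
  show "tens (c \<cdot>\<^sub>C x) y = c \<cdot>\<^sub>C tens x y"
    by (simp add: tens_def cscale_Abs_tensor)
  show "tens x (c \<cdot>\<^sub>C y) = c \<cdot>\<^sub>C tens x y"
    by (simp add: tens_def cscale_Abs_tensor Abs_tensor_eq_iff teq_bal teq_sym)
qed

lemmas tens_simps = cbilinearD[OF cbilinear_tens] cbilinear_zero[OF cbilinear_tens]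

lemma Abs_tensor_eq_sum_list_tens: "Abs_tensor xs = sum_list (map (case_prod tens) xs)"
proof (induction xs)
  case Nil
  then show ?case by (simp add: zero_tensor_def)
next
  case (Cons x xs)
  have "Abs_tensor (x # xs) = Abs_tensor [x] + Abs_tensor xs"
    by (simp add: Abs_tensor_append)
  with Cons.IH show ?case
    by (cases x) (simp add: tens_def)
qed

lemma tlift_tens_self: "tlift tens t = (t :: ('a::cvec, 'b::cvec) tensor)"
  unfolding tlift_eq_sum_list Abs_tensor_eq_sum_list_tens[symmetric] by simp

lemma tensor_induct [case_names zero tens add]:
  fixes t :: "('a::cvec, 'b::cvec) tensor"
  assumes "P 0" and "\<And>v w. P (tens v w)" and "\<And>s t. P s \<Longrightarrow> P t \<Longrightarrow> P (s + t)"
  shows "P t"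
proof -
  have "P (sum_list (map (case_prod tens) xs))" for xs
    by (induction xs) (auto intro: assms)
  then show ?thesis
    by (metis Abs_tensor_eq_sum_list_tens Abs_Rep_tensor)
qed

lemma clinear_tensor_eqI:
  fixes f g :: "('a::cvec, 'b::cvec) tensor \<Rightarrow> 'c::cvec"
  assumes "clinear f" and "clinear g" and "\<And>v w. f (tens v w) = g (tens v w)"
  shows "f t = g t"
  by (induction t rule: tensor_induct) (simp_all add: assms clinear_zero clinearD)

lemma cbilinear_tlift_left:
  assumes "\<And>z. cbilinear (\<lambda>x y. K x y z)" and "\<And>x y. clinear (K x y)"
  shows "cbilinear (\<lambda>t z. tlift (\<lambda>x y. K x y z) t)"
  by (rule cbilinearI) (simp_all add: tlift_add[OF assms(1)] tlift_cscale[OF assms(1)]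
      clinearD[OF assms(2)] tlift_add_fun tlift_cscale_fun)

lemma cbilinear_tlift_right:
  assumes "\<And>x. cbilinear (\<lambda>y z. K x y z)" and "\<And>y z. clinear (\<lambda>x. K x y z)"
  shows "cbilinear (\<lambda>x t. tlift (\<lambda>y z. K x y z) t)"
  by (rule cbilinearI) (simp_all add: tlift_add[OF assms(1)] tlift_cscale[OF assms(1)]
      clinearD[OF assms(2)] tlift_add_fun tlift_cscale_fun)

lemma cbilinear_sum_list:
  assumes "\<And>i. i \<in> set is \<Longrightarrow> cbilinear (\<beta> i)"
  shows "cbilinear (\<lambda>x y. sum_list (map (\<lambda>i. \<beta> i x y) is))"
  by (rule cbilinearI) (simp_all add: cbilinearD[OF assms] sum_list_addf cscale_sum_list cong: map_cong)

lemma cbilinear_tens_map: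
  fixes f :: "'a::cvec \<Rightarrow> 'c::cvec" and g :: "'b::cvec \<Rightarrow> 'd::cvec"
  shows "clinear f \<Longrightarrow> clinear g \<Longrightarrow> cbilinear (\<lambda>x y. tens (f x) (g y))"
  by (simp add: cbilinear_def clinear_def tens_simps)

lemma tmap_tens:
  fixes f :: "'a::cvec \<Rightarrow> 'c::cvec" and g :: "'b::cvec \<Rightarrow> 'd::cvec"
  shows "clinear f \<Longrightarrow> clinear g \<Longrightarrow> tmap f g (tens x y) = tens (f x) (g y)"
  unfolding tmap_def by (rule tlift_tens) (rule cbilinear_tens_map)

lemma clinear_tmap:
  fixes f :: "'a::cvec \<Rightarrow> 'c::cvec" and g :: "'b::cvec \<Rightarrow> 'd::cvec"
  shows "clinear f \<Longrightarrow> clinear g \<Longrightarrow> clinear (tmap f g)"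
  unfolding tmap_def by (rule clinear_tlift) (rule cbilinear_tens_map)

lemma tlift_tmap: "cbilinear \<beta> \<Longrightarrow> tlift \<beta> (tmap f g t) = tlift (\<lambda>x y. \<beta> (f x) (g y)) t"
  unfolding tmap_def by (subst additive_tlift[of "tlift \<beta>"]) (simp_all add: tlift_add)

lemma tmap_tmap:
  fixes f :: "'a::cvec \<Rightarrow> 'c::cvec" and g :: "'b::cvec \<Rightarrow> 'd::cvec"
    and f' :: "'c \<Rightarrow> 'e::cvec" and g' :: "'d \<Rightarrow> 'f::cvec"
  shows "clinear f' \<Longrightarrow> clinear g' \<Longrightarrow> tmap f' g' (tmap f g t) = tmap (f' \<circ> f) (g' \<circ> g) t"
  unfolding tmap_def[of f' g'] by (simp add: tlift_tmap cbilinear_tens_map) (simp add: tmap_def)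

lemma tmap_id_id: "tmap id id t = (t :: ('a::cvec, 'b::cvec) tensor)"
  by (simp add: tmap_def tlift_tens_self)

lemma tlift_tassoc:
  "cbilinear \<beta> \<Longrightarrow> tlift \<beta> (tassoc t) = tlift (\<lambda>s z. tlift (\<lambda>x y. \<beta> x (tens y z)) s) t"
proof -
  assume \<beta>: "cbilinear \<beta>"
  have additive: "tlift \<beta> (x + y) = tlift \<beta> x + tlift \<beta> y" for x y
    by (rule tlift_add[OF \<beta>])
  show ?thesis
    unfolding tassoc_def additive_tlift[of "tlift \<beta>", OF additive] by (simp add: \<beta>)
qed

lemma right_comodule_coassoc_tlift:
  assumes comodule: "right_comodule \<Delta> \<epsilon> \<rho>"
    and K12: "\<And>z. cbilinear (\<lambda>x y. K x y z)" and K23: "\<And>x. cbilinear (\<lambda>y z. K x y z)"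
  shows "tlift (\<lambda>v0 a. tlift (\<lambda>v1 a1. K v1 a1 a) (\<rho> v0)) (\<rho> v)
       = tlift (\<lambda>v0 a. tlift (\<lambda>a1 a2. K v0 a1 a2) (\<Delta> a)) (\<rho> v)"
proof -
  have \<beta>: "cbilinear (\<lambda>t a. tlift (\<lambda>v1 a1. K v1 a1 a) t)"
    using K12 cbilinear_clinear_right[OF K23] by (rule cbilinear_tlift_left)
  have \<gamma>: "cbilinear (\<lambda>x u. tlift (\<lambda>a1 a. K x a1 a) u)"
    using K23 cbilinear_clinear_left[OF K12] by (rule cbilinear_tlift_right)
  have "tlift (\<lambda>v0 a. tlift (\<lambda>v1 a1. K v1 a1 a) (\<rho> v0)) (\<rho> v)
      = tlift (\<lambda>t a. tlift (\<lambda>v1 a1. K v1 a1 a) t) (tmap \<rho> id (\<rho> v))"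
    by (simp add: tlift_tmap[OF \<beta>])
  also have "\<dots> = tlift (\<lambda>x u. tlift (\<lambda>a1 a. K x a1 a) u) (tassoc (tmap \<rho> id (\<rho> v)))"
    unfolding tlift_tassoc[OF \<gamma>] tlift_tens[OF K23] ..
  also have "\<dots> = tlift (\<lambda>x u. tlift (\<lambda>a1 a. K x a1 a) u) (tmap id \<Delta> (\<rho> v))"
    using comodule unfolding right_comodule_def by simp
  also have "\<dots> = tlift (\<lambda>v0 a. tlift (\<lambda>a1 a2. K v0 a1 a2) (\<Delta> a)) (\<rho> v)"
    by (simp add: tlift_tmap[OF \<gamma>])
  finally show ?thesis .
qed

section \<open>The induced structures on \<open>V \<odot> W\<close>\<close>

lemma left_B_module_clinear: "left_B_module B act \<Longrightarrow> b \<in> B \<Longrightarrow> clinear (act b)"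
  unfolding left_B_module_def by blast

lemma left_UNIV_module_simps:
  assumes "left_B_module UNIV act"
  shows "act a (x + y) = act a x + act a y" and "act a (c \<cdot>\<^sub>C x) = c \<cdot>\<^sub>C act a x"
    and "act (a + a') x = act a x + act a' x" and "act (c \<cdot>\<^sub>C a) x = c \<cdot>\<^sub>C act a x"
    and "act (a * a') x = act a (act a' x)" and "act 1 x = x"
  using assms unfolding left_B_module_def clinear_def by blast+

lemma crep_in_B: "in_B_odot_A B (\<Delta> b) \<Longrightarrow> set (map fst (crep B \<Delta> b)) \<subseteq> B"
  unfolding in_B_odot_A_def crep_def by (rule someI2_ex) blast+

lemma quotient_coalgebra_cbilinear_action:
  assumes "quotient_coalgebra \<Delta> \<epsilon> B \<pi> \<Delta>C \<epsilon>C actC"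
  shows "cbilinear actC"
proof -
  have \<pi>: "clinear \<pi>" "surj \<pi>" and actC: "\<And>a a'. actC a (\<pi> a') = \<pi> (a * a')"
    using assms unfolding quotient_coalgebra_def by blast+
  show ?thesis
  proof (rule cbilinearI)
    fix a a' :: 'a and x y and c :: complex
    obtain p q where xy: "x = \<pi> p" "y = \<pi> q"
      using \<open>surj \<pi>\<close> by (metis surjD)
    note \<pi>_simps = actC clinearD[OF \<pi>(1), symmetric]
    show "actC (a + a') x = actC a x + actC a' x" "actC a (x + y) = actC a x + actC a y"
      by (simp_all add: xy \<pi>_simps distrib_left distrib_right)
    show "actC (c \<cdot>\<^sub>C a) x = c \<cdot>\<^sub>C actC a x"
      by (simp add: xy \<pi>_simps cscale_mult_left)
    show "actC a (c \<cdot>\<^sub>C x) = c \<cdot>\<^sub>C actC a x"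
      by (simp add: xy \<pi>_simps cscale_mult_right)
  qed
qed

lemma cbilinear_indV_act: "clinear f \<Longrightarrow> cbilinear (\<lambda>v (w::'w::cvec). tens (f v) w)"
  using cbilinear_tens_map[OF _ clinear_id] by (simp add: id_def)

lemma indV_act_tens: "clinear (actV b) \<Longrightarrow> indV_act actV b (tens v w) = tens (actV b v) w"
  unfolding indV_act_def by (rule tlift_tens) (rule cbilinear_indV_act)

lemma clinear_indV_act: "clinear (actV b) \<Longrightarrow> clinear (indV_act actV b :: ('v::cvec, 'w::cvec) tensor \<Rightarrow> _)"
  unfolding indV_act_def by (rule clinear_tlift) (rule cbilinear_indV_act)

lemma cbilinear_indW_act:
  assumes "left_B_module B actV" and "left_B_module UNIV actW" and "set (map fst (crep B \<Delta> b)) \<subseteq> B"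
  shows "cbilinear (\<lambda>v w. sum_list (map (\<lambda>(b1, b2). tens (actV b1 v) (actW b2 w)) (crep B \<Delta> b)))"
proof (rule cbilinear_sum_list)
  fix i assume "i \<in> set (crep B \<Delta> b)"
  moreover obtain b1 b2 where "i = (b1, b2)" by force
  ultimately show "cbilinear (\<lambda>v w. case i of (b1, b2) \<Rightarrow> tens (actV b1 v) (actW b2 w))"
    using assms by (force intro: cbilinear_tens_map left_B_module_clinear)
qed

lemma
  assumes "left_B_module B actV" and "left_B_module UNIV actW" and "set (map fst (crep B \<Delta> b)) \<subseteq> B"
  shows indW_act_tens: "indW_act B \<Delta> actV actW b (tens v w)
      = sum_list (map (\<lambda>(b1, b2). tens (actV b1 v) (actW b2 w)) (crep B \<Delta> b))"
    and clinear_indW_act: "clinear (indW_act B \<Delta> actV actW b)"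
  unfolding indW_act_def lsum_eq_sum_list
  by (rule tlift_tens clinear_tlift, rule cbilinear_indW_act[OF assms])+

lemma cbilinear_indV_coact:
  assumes "clinear \<rho>V" and "clinear \<rho>W" and "cbilinear actC"
  shows "cbilinear (\<lambda>v w. tlift (\<lambda>v0 a. tlift (\<lambda>w0 c. tens (tens v0 w0) (actC a c)) (\<rho>W w)) (\<rho>V v))"
proof -
  have inner: "cbilinear (\<lambda>w0 c. tens (tens v0 w0) (actC a c))" for v0 a
    by (rule cbilinearI) (simp_all add: tens_simps cbilinearD[OF assms(3)])
  have outer: "cbilinear (\<lambda>v0 a. tlift (\<lambda>w0 c. tens (tens v0 w0) (actC a c)) t)" for t
    by (rule cbilinearI) (simp_all add: tens_simps cbilinearD[OF assms(3)] tlift_add_fun tlift_cscale_fun)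
  show ?thesis
    by (rule cbilinearI) (simp_all add: clinearD[OF assms(1)] clinearD[OF assms(2)] tlift_add tlift_cscale
        inner outer tlift_add_fun tlift_cscale_fun)
qed

lemma
  assumes "clinear \<rho>V" and "clinear \<rho>W" and "cbilinear actC"
  shows indV_coact_tens: "indV_coact \<rho>V \<rho>W actC (tens v w)
      = tlift (\<lambda>v0 a. tlift (\<lambda>w0 c. tens (tens v0 w0) (actC a c)) (\<rho>W w)) (\<rho>V v)"
    and clinear_indV_coact: "clinear (indV_coact \<rho>V \<rho>W actC)"
  unfolding indV_coact_def by (rule tlift_tens clinear_tlift, rule cbilinear_indV_coact[OF assms])+

lemma cbilinear_indW_coact:
  assumes "clinear \<rho>W"
  shows "cbilinear (\<lambda>(v::'v::cvec) w. tlift (\<lambda>w0 c. tens (tens v w0) c) (\<rho>W w))"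
proof -
  have inner: "cbilinear (\<lambda>w0 c. tens (tens v w0) c)" for v :: 'v
    by (rule cbilinearI) (simp_all add: tens_simps)
  show ?thesis
    by (rule cbilinearI) (simp_all add: clinearD[OF assms] tlift_add tlift_cscale inner tens_simps
        tlift_add_fun tlift_cscale_fun)
qed

lemma
  assumes "clinear \<rho>W"
  shows indW_coact_tens: "indW_coact \<rho>W (tens v w) = tlift (\<lambda>w0 c. tens (tens v w0) c) (\<rho>W w)"
    and clinear_indW_coact: "clinear (indW_coact \<rho>W :: ('v::cvec, 'w::cvec) tensor \<Rightarrow> _)"
  unfolding indW_coact_def by (rule tlift_tens clinear_tlift, rule cbilinear_indW_coact[OF assms])+

lemma iso_BModCI:
  fixes f :: "'x::cvec \<Rightarrow> 'y::cvec" and g :: "'y \<Rightarrow> 'x"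
    and co1 :: "'x \<Rightarrow> ('x, 'c::cvec) tensor" and co2 :: "'y \<Rightarrow> ('y, 'c) tensor"
  assumes "clinear f" and "clinear g" and gf: "\<And>x. g (f x) = x" and fg: "\<And>y. f (g y) = y"
    and act: "\<And>b x. b \<in> B \<Longrightarrow> f (act1 b x) = act2 b (f x)"
    and co: "\<And>x. co2 (f x) = tmap f id (co1 x)"
  shows "iso_BModC B act1 co1 act2 co2"
  unfolding iso_BModC_def
proof (intro exI conjI allI ballI)
  fix b y assume "b \<in> B"
  show "g (act2 b y) = act1 b (g y)"
    by (metis act[OF \<open>b \<in> B\<close>] fg gf)
next
  fix y
  have "g \<circ> f = id"
    using gf by auto
  then have "tmap g id (tmap f id (co1 (g y))) = co1 (g y)"
    by (simp add: tmap_tmap \<open>clinear g\<close> clinear_id tmap_id_id)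
  then show "co1 (g y) = tmap g id (co2 y)"
    by (metis co fg)
qed (use assms in auto)

locale comodule_module =
  fixes \<Delta> :: "'a::calg \<Rightarrow> ('a, 'a) tensor" and \<epsilon> :: "'a \<Rightarrow> complex"
    and \<rho> :: "'v::cvec \<Rightarrow> ('v, 'a) tensor" and act :: "'a \<Rightarrow> 'w::cvec \<Rightarrow> 'w"
  assumes comodule: "right_comodule \<Delta> \<epsilon> \<rho>" and module: "left_B_module UNIV act"
begin

lemma clinear_\<rho>: "clinear \<rho>"
  using comodule unfolding right_comodule_def by blast

lemma counit: "tlift (\<lambda>v0 a. \<epsilon> a \<cdot>\<^sub>C v0) (\<rho> v) = v"
  using comodule unfolding right_comodule_def by blast

lemmas act_simps = left_UNIV_module_simps[OF module]

definition twist :: "('a \<Rightarrow> 'a) \<Rightarrow> ('v, 'w) tensor \<Rightarrow> ('v, 'w) tensor" where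
  "twist \<phi> = tlift (\<lambda>v w. tlift (\<lambda>v0 a. tens v0 (act (\<phi> a) w)) (\<rho> v))"

lemma cbilinear_twist:
  assumes "clinear \<phi>"
  shows "cbilinear (\<lambda>v w. tlift (\<lambda>v0 a. tens v0 (act (\<phi> a) w)) (\<rho> v))"
proof -
  have inner: "cbilinear (\<lambda>v0 a. tens v0 (act (\<phi> a) w))" for w
    by (rule cbilinearI) (simp_all add: tens_simps act_simps clinearD[OF assms])
  show ?thesis
    by (rule cbilinearI) (simp_all add: clinearD[OF clinear_\<rho>] tlift_add tlift_cscale inner
        act_simps tens_simps tlift_add_fun tlift_cscale_fun)
qed

lemma
  assumes "clinear \<phi>"
  shows twist_tens: "twist \<phi> (tens v w) = tlift (\<lambda>v0 a. tens v0 (act (\<phi> a) w)) (\<rho> v)"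
    and clinear_twist: "clinear (twist \<phi>)"
  unfolding twist_def by (rule tlift_tens clinear_tlift, rule cbilinear_twist[OF assms])+

lemma twist_twist_tens:
  assumes \<phi>: "clinear \<phi>" and \<psi>: "clinear \<psi>"
  shows "twist \<psi> (twist \<phi> (tens v w))
    = tlift (\<lambda>v0 a. tlift (\<lambda>a1 a2. tens v0 (act (\<psi> a1 * \<phi> a2) w)) (\<Delta> a)) (\<rho> v)"
proof -
  have "twist \<psi> (twist \<phi> (tens v w)) = tlift (\<lambda>v0 a. twist \<psi> (tens v0 (act (\<phi> a) w))) (\<rho> v)"
    unfolding twist_tens[OF \<phi>] by (rule additive_tlift) (rule clinearD[OF clinear_twist[OF \<psi>]])
  also have "\<dots> = tlift (\<lambda>v0 a. tlift (\<lambda>v1 a1. tens v1 (act (\<psi> a1) (act (\<phi> a) w))) (\<rho> v0)) (\<rho> v)"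
    by (simp add: twist_tens[OF \<psi>])
  also have "\<dots> = tlift (\<lambda>v0 a. tlift (\<lambda>a1 a2. tens v0 (act (\<psi> a1) (act (\<phi> a2) w))) (\<Delta> a)) (\<rho> v)"
    by (rule right_comodule_coassoc_tlift[OF comodule];
        rule cbilinearI; simp add: tens_simps act_simps clinearD[OF \<phi>] clinearD[OF \<psi>])
  finally show ?thesis
    by (simp add: act_simps)
qed

lemma twist_convolution_inverse:
  assumes \<phi>: "clinear \<phi>" and \<psi>: "clinear \<psi>"
    and convolution: "\<And>a. tlift (\<lambda>a1 a2. \<psi> a1 * \<phi> a2) (\<Delta> a) = \<epsilon> a \<cdot>\<^sub>C 1"
  shows "twist \<psi> (twist \<phi> x) = x"
proof (induction x rule: tensor_induct)
  case zero
  show ?case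
    by (simp add: clinear_zero clinear_twist \<phi> \<psi>)
next
  case (tens v w)
  have "tlift (\<lambda>a1 a2. tens v0 (act (\<psi> a1 * \<phi> a2) w)) (\<Delta> a) = tens (\<epsilon> a \<cdot>\<^sub>C v0) w"
    for v0 :: 'v and a
  proof -
    have "tlift (\<lambda>a1 a2. tens v0 (act (\<psi> a1 * \<phi> a2) w)) (\<Delta> a)
        = tens v0 (act (tlift (\<lambda>a1 a2. \<psi> a1 * \<phi> a2) (\<Delta> a)) w)"
      by (rule additive_tlift[of "\<lambda>x. tens v0 (act x w)", symmetric]) (simp add: act_simps tens_simps)
    then show ?thesis
      by (simp add: convolution act_simps tens_simps)
  qed
  then have "twist \<psi> (twist \<phi> (tens v w)) = tlift (\<lambda>v0 a. tens (\<epsilon> a \<cdot>\<^sub>C v0) w) (\<rho> v)"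
    by (simp add: twist_twist_tens[OF \<phi> \<psi>])
  also have "\<dots> = tens (tlift (\<lambda>v0 a. \<epsilon> a \<cdot>\<^sub>C v0) (\<rho> v)) w"
    by (rule additive_tlift[of "\<lambda>x. tens x w", symmetric]) (simp add: tens_simps)
  finally show ?case
    by (simp add: counit)
next
  case (add s t)
  then show ?case
    by (simp add: clinearD clinear_twist \<phi> \<psi>)
qed

lemma
  assumes "hopf_algebra \<Delta> \<epsilon> S"
  shows twist_antipode_twist: "twist S (twist id x) = x"
    and twist_twist_antipode: "twist id (twist S x) = x"
  using assms clinear_id unfolding hopf_algebra_def
  by (auto intro: twist_convolution_inverse)

lemma twist_indV_act_tens:
  assumes BA: "Mod_BA \<Delta> \<epsilon> B actV \<rho>" and coideal: "in_B_odot_A B (\<Delta> b)" and "b \<in> B"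
  shows "twist id (indV_act actV b (tens v w)) = indW_act B \<Delta> actV act b (twist id (tens v w))"
proof -
  have V: "left_B_module B actV"
    and compat: "\<rho> (actV b v) = sum_list (map (\<lambda>(b1, b2). tlift (\<lambda>v0 a. tens (actV b1 v0) (b2 * a)) (\<rho> v))
        (crep B \<Delta> b))"
    using BA \<open>b \<in> B\<close> unfolding Mod_BA_def by auto
  have crep: "set (map fst (crep B \<Delta> b)) \<subseteq> B"
    using coideal by (rule crep_in_B)
  note indW = indW_act_tens[OF V module crep] clinear_indW_act[OF V module crep]
  let ?L = "tlift (\<lambda>v0 a. tens v0 (act a w))"
  have L: "cbilinear (\<lambda>v0 a. tens v0 (act a w))"
    by (rule cbilinearI) (simp_all add: tens_simps act_simps)
  have L_additive: "?L (x + y) = ?L x + ?L y" for x y :: "('v, 'a) tensor"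
    by (rule tlift_add[OF L])
  have "twist id (indV_act actV b (tens v w)) = ?L (\<rho> (actV b v))"
    by (simp add: indV_act_tens left_B_module_clinear[OF V \<open>b \<in> B\<close>] twist_tens[OF clinear_id])
  also have "\<dots> = sum_list (map (\<lambda>(b1, b2). tlift (\<lambda>v0 a. tens (actV b1 v0) (act b2 (act a w))) (\<rho> v))
      (crep B \<Delta> b))"
  proof -
    have "?L (tlift (\<lambda>v0 a. tens (actV b1 v0) (b2 * a)) (\<rho> v))
        = tlift (\<lambda>v0 a. tens (actV b1 v0) (act b2 (act a w))) (\<rho> v)" for b1 b2
      by (subst additive_tlift[OF L_additive]) (simp add: L act_simps)
    then show ?thesis
      unfolding compat additive_sum_list[of ?L, OF L_additive] by (simp add: split_def comp_def)
  qed
  also have "\<dots> = tlift (\<lambda>v0 a. indW_act B \<Delta> actV act b (tens v0 (act a w))) (\<rho> v)"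
    by (simp add: indW tlift_sum_list_fun split_def)
  also have "\<dots> = indW_act B \<Delta> actV act b (twist id (tens v w))"
    unfolding twist_tens[OF clinear_id] id_apply
    by (rule additive_tlift[symmetric]) (rule clinearD(1)[OF indW(2)])
  finally show ?thesis .
qed

lemma twist_indV_act:
  assumes BA: "Mod_BA \<Delta> \<epsilon> B actV \<rho>" and coideal: "in_B_odot_A B (\<Delta> b)" and "b \<in> B"
  shows "twist id (indV_act actV b x) = indW_act B \<Delta> actV act b (twist id x)"
proof -
  have V: "left_B_module B actV"
    using BA unfolding Mod_BA_def by blast
  have "clinear (\<lambda>x. twist id (indV_act actV b x))"
    by (intro clinear_comp[OF clinear_twist[OF clinear_id]] clinear_indV_act
        left_B_module_clinear[OF V \<open>b \<in> B\<close>])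
  moreover have "clinear (\<lambda>x. indW_act B \<Delta> actV act b (twist id x))"
    by (intro clinear_comp[OF clinear_indW_act] clinear_twist[OF clinear_id] V module
        crep_in_B[of B \<Delta> b, OF coideal])
  ultimately show ?thesis
    by (rule clinear_tensor_eqI) (rule twist_indV_act_tens[OF assms])
qed

lemma indW_coact_twist_tens:
  fixes \<rho>W :: "'w \<Rightarrow> ('w, 'c::cvec) tensor"
  assumes AC: "Mod_AC \<Delta> \<Delta>C \<epsilon>C actC act \<rho>W" and C: "cbilinear actC"
  shows "indW_coact \<rho>W (twist id (tens v w)) = tmap (twist id) id (indV_coact \<rho> \<rho>W actC (tens v w))"
proof -
  have \<rho>W: "clinear \<rho>W"
    and compat: "\<And>a w. \<rho>W (act a w) = tlift (\<lambda>a1 a2. tlift (\<lambda>w0 c. tens (act a1 w0) (actC a2 c)) (\<rho>W w)) (\<Delta> a)"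
    using AC unfolding Mod_AC_def right_C_comodule_def by blast+
  let ?K = "\<lambda>v0 a1 a2. tlift (\<lambda>w0 c. tens (tens v0 (act a1 w0)) (actC a2 c)) (\<rho>W w)"
  have K: "cbilinear (\<lambda>x y. ?K x y z)" "cbilinear (\<lambda>y z. ?K x y z)" for x y z
    by (rule cbilinearI; simp add: tens_simps act_simps cbilinearD[OF C] tlift_add_fun tlift_cscale_fun)+
  have tens_tens: "cbilinear (\<lambda>(w0 :: 'w) (c :: 'c). tens (tens v0 w0) c)" for v0 :: 'v
    by (rule cbilinearI) (simp_all add: tens_simps)
  have "indW_coact \<rho>W (tens v0 (act a w)) = tlift (\<lambda>a1 a2. ?K v0 a1 a2) (\<Delta> a)"
    for v0 :: 'v and a
    unfolding indW_coact_tens[OF \<rho>W] compat additive_tlift[OF tlift_add[OF tens_tens[of v0]]]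
    by (simp add: tens_tens)
  then have lhs: "indW_coact \<rho>W (twist id (tens v w)) = tlift (\<lambda>v0 a. tlift (\<lambda>a1 a2. ?K v0 a1 a2) (\<Delta> a)) (\<rho> v)"
    unfolding twist_tens[OF clinear_id] id_apply additive_tlift[OF clinearD(1)[OF clinear_indW_coact[OF \<rho>W]]]
    by simp
  have T: "clinear (tmap (twist id) (id :: 'c \<Rightarrow> 'c))"
    by (intro clinear_tmap clinear_twist clinear_id)
  have "tmap (twist id) id (indV_coact \<rho> \<rho>W actC (tens v w))
      = tlift (\<lambda>v0 a. tlift (\<lambda>w0 c. tens (twist id (tens v0 w0)) (actC a c)) (\<rho>W w)) (\<rho> v)"
    unfolding indV_coact_tens[OF clinear_\<rho> \<rho>W C] additive_tlift[OF clinearD(1)[OF T]]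
    by (simp add: tmap_tens[OF clinear_twist[OF clinear_id] clinear_id])
  also have "\<dots> = tlift (\<lambda>v0 a. tlift (\<lambda>w0 c. tlift (\<lambda>v1 a1. tens (tens v1 (act a1 w0)) (actC a c)) (\<rho> v0))
      (\<rho>W w)) (\<rho> v)"
    unfolding twist_tens[OF clinear_id] id_apply
    by (subst additive_tlift[of "\<lambda>x. tens x X" for X]) (simp_all add: tens_simps)
  also have "\<dots> = tlift (\<lambda>v0 a. tlift (\<lambda>v1 a1. ?K v1 a1 a) (\<rho> v0)) (\<rho> v)"
    by (subst tlift_tlift_swap) (rule refl)
  also have "\<dots> = tlift (\<lambda>v0 a. tlift (\<lambda>a1 a2. ?K v0 a1 a2) (\<Delta> a)) (\<rho> v)"
    by (rule right_comodule_coassoc_tlift[OF comodule K])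
  finally show ?thesis
    using lhs by simp
qed

lemma indW_coact_twist:
  fixes \<rho>W :: "'w \<Rightarrow> ('w, 'c::cvec) tensor"
  assumes AC: "Mod_AC \<Delta> \<Delta>C \<epsilon>C actC act \<rho>W" and C: "cbilinear actC"
  shows "indW_coact \<rho>W (twist id x) = tmap (twist id) id (indV_coact \<rho> \<rho>W actC x)"
proof -
  have \<rho>W: "clinear \<rho>W"
    using AC unfolding Mod_AC_def right_C_comodule_def by blast
  have "clinear (\<lambda>x. indW_coact \<rho>W (twist id x))"
    by (intro clinear_comp[OF clinear_indW_coact[OF \<rho>W]] clinear_twist clinear_id)
  moreover have "clinear (\<lambda>x. tmap (twist id) id (indV_coact \<rho> \<rho>W actC x))"
    by (intro clinear_comp[OF clinear_tmap[OF clinear_twist[OF clinear_id] clinear_id]]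
        clinear_indV_coact[OF clinear_\<rho> \<rho>W C])
  ultimately show ?thesis
    by (rule clinear_tensor_eqI) (rule indW_coact_twist_tens[OF assms])
qed

end

theorem mainTheorem6:
  fixes \<Delta> :: "'a::calg \<Rightarrow> ('a, 'a) tensor" and \<epsilon> :: "'a \<Rightarrow> complex" and S star :: "'a \<Rightarrow> 'a"
    and B :: "'a set"
    and \<pi>C :: "'a \<Rightarrow> 'c::cvec" and \<Delta>C :: "'c \<Rightarrow> ('c, 'c) tensor" and \<epsilon>C :: "'c \<Rightarrow> complex"
    and actC :: "'a \<Rightarrow> 'c \<Rightarrow> 'c"
    and actV :: "'a \<Rightarrow> 'v::cvec \<Rightarrow> 'v" and \<rho>V :: "'v \<Rightarrow> ('v, 'a) tensor"
    and actW :: "'a \<Rightarrow> 'w::cvec \<Rightarrow> 'w" and \<rho>W :: "'w \<Rightarrow> ('w, 'c) tensor"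
  assumes "cqg_hopf_star_algebra \<Delta> \<epsilon> S star"
    and "right_coideal_star_subalgebra \<Delta> star B"
    and "quotient_coalgebra \<Delta> \<epsilon> B \<pi>C \<Delta>C \<epsilon>C actC"
    and "Mod_BA \<Delta> \<epsilon> B actV \<rho>V"
    and "Mod_AC \<Delta> \<Delta>C \<epsilon>C actC actW \<rho>W"
  shows "iso_BModC B (indV_act actV) (indV_coact \<rho>V \<rho>W actC)
                     (indW_act B \<Delta> actV actW) (indW_coact \<rho>W)"
proof -
  have hopf: "hopf_algebra \<Delta> \<epsilon> S"
    using assms(1) unfolding cqg_hopf_star_algebra_def star_hopf_algebra_def by blast
  have coideal: "\<And>b. b \<in> B \<Longrightarrow> in_B_odot_A B (\<Delta> b)"
    using assms(2) unfolding right_coideal_star_subalgebra_def by blast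
  interpret comodule_module \<Delta> \<epsilon> \<rho>V actW
    using assms(4,5) unfolding Mod_BA_def Mod_AC_def by unfold_locales blast+
  show ?thesis
  proof (rule iso_BModCI)
    have "clinear S"
      using hopf unfolding hopf_algebra_def by blast
    then show "clinear (twist id)" and "clinear (twist S)"
      by (simp_all add: clinear_twist clinear_id)
    show "twist S (twist id x) = x" and "twist id (twist S y) = y" for x y
      using hopf by (rule twist_antipode_twist twist_twist_antipode)+
    show "twist id (indV_act actV b x) = indW_act B \<Delta> actV actW b (twist id x)" if "b \<in> B" for b x
      using assms(4) coideal[OF that] that by (rule twist_indV_act)
    show "indW_coact \<rho>W (twist id x) = tmap (twist id) id (indV_coact \<rho>V \<rho>W actC x)" for x
      using assms(5) quotient_coalgebra_cbilinear_action[OF assms(3)] by (rule indW_coact_twist)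
  qed
qed

end
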